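(* Let $A$ be a connected monounary algebra containing no cycle. If $A\not\cong Z$ and $A^{(\infty)}=A$, then $\mathbf V(A)=\mathbf V(E)$.
   Context: A monounary algebra is a pair $(A,f)$ with $A$ a nonempty set and $f:A\to A$; direct products are coordinatewise. It is connected if for all $x,y$ there are $m,n\ge0$ with $f^m(x)=f^n(y)$; it contains a cycle if $f^k(x)=x$ for some $x\in A$, $k\ge1$. A retract of $A$ is a nonempty subalgebra $M$ such that there is an endomorphism $h:A\to M$ with $h|_M=\mathrm{id}$. A retract variety is a class closed under isomorphisms, retracts and direct products; $\mathbf V(\mathcal K)$ is the smallest retract variety containing $\mathcal K$. $A^{(\infty)}$ is the set of $x\in A$ admitting a sequence $x_0=x,x_1,\dots$ in $A$ with $f(x_n)=x_{n-1}$ for all $n\ge1$. $Z=(\mathbb Z,k\mapsto k+1)$; $E$ has universe $\mathbb Z\cup\{(k,1):k\in\mathbb N\}$ with $f(k)=k+1$ on $\mathbb Z$, $f((k,1))=(k-1,1)$ for $k>1$ and $f((1,1))=0$. *)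

theory Defs
  imports "HOL-Library.FuncSet"
begin

definition mu_alg :: "'a set \<Rightarrow> ('a \<Rightarrow> 'a) \<Rightarrow> bool" where
  "mu_alg S f \<longleftrightarrow> S \<noteq> {} \<and> f ` S \<subseteq> S"

definition mu_hom :: "'a set \<Rightarrow> ('a \<Rightarrow> 'a) \<Rightarrow> 'b set \<Rightarrow> ('b \<Rightarrow> 'b) \<Rightarrow> ('a \<Rightarrow> 'b) \<Rightarrow> bool" where
  "mu_hom S f T g h \<longleftrightarrow> h ` S \<subseteq> T \<and> (\<forall>x\<in>S. h (f x) = g (h x))"

definition mu_iso :: "'a set \<Rightarrow> ('a \<Rightarrow> 'a) \<Rightarrow> 'b set \<Rightarrow> ('b \<Rightarrow> 'b) \<Rightarrow> bool" where
  "mu_iso S f T g \<longleftrightarrow> (\<exists>h. mu_hom S f T g h \<and> bij_betw h S T)"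

definition mu_retract :: "'a set \<Rightarrow> ('a \<Rightarrow> 'a) \<Rightarrow> 'a set \<Rightarrow> bool" where
  "mu_retract S f M \<longleftrightarrow> M \<noteq> {} \<and> M \<subseteq> S \<and> f ` M \<subseteq> M \<and>
     (\<exists>h. mu_hom S f M f h \<and> (\<forall>x\<in>M. h x = x))"

definition pow_carrier :: "'i set \<Rightarrow> 'a set \<Rightarrow> ('i \<Rightarrow> 'a) set" where
  "pow_carrier I S = PiE I (\<lambda>_. S)"

definition pow_op :: "'i set \<Rightarrow> ('a \<Rightarrow> 'a) \<Rightarrow> ('i \<Rightarrow> 'a) \<Rightarrow> ('i \<Rightarrow> 'a)" where
  "pow_op I f = (\<lambda>x. restrict (\<lambda>i. f (x i)) I)"

text \<open>Membership of (T,g) in the retract variety generated by (S,f):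
  (T,g) is isomorphic to a retract of a direct power of (S,f).  Index sets are taken
  in a type large enough for both algebras.\<close>
definition in_RV :: "'a set \<Rightarrow> ('a \<Rightarrow> 'a) \<Rightarrow> 'b set \<Rightarrow> ('b \<Rightarrow> 'b) \<Rightarrow> bool" where
  "in_RV S f T g \<longleftrightarrow> (\<exists>(I :: ('a + 'b) set) M.
      mu_retract (pow_carrier I S) (pow_op I f) M \<and> mu_iso T g M (pow_op I f))"

text \<open>V(A) = V(B) iff each lies in the retract variety generated by the other.\<close>
definition same_RV :: "'a set \<Rightarrow> ('a \<Rightarrow> 'a) \<Rightarrow> 'b set \<Rightarrow> ('b \<Rightarrow> 'b) \<Rightarrow> bool" where
  "same_RV S f T g \<longleftrightarrow> in_RV S f T g \<and> in_RV T g S f"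

definition connected_alg :: "'a set \<Rightarrow> ('a \<Rightarrow> 'a) \<Rightarrow> bool" where
  "connected_alg S f \<longleftrightarrow> (\<forall>x\<in>S. \<forall>y\<in>S. \<exists>m n. (f ^^ m) x = (f ^^ n) y)"

definition has_cycle :: "'a set \<Rightarrow> ('a \<Rightarrow> 'a) \<Rightarrow> bool" where
  "has_cycle S f \<longleftrightarrow> (\<exists>x\<in>S. \<exists>k::nat. k \<ge> 1 \<and> (f ^^ k) x = x)"

definition inf_part :: "'a set \<Rightarrow> ('a \<Rightarrow> 'a) \<Rightarrow> 'a set" where
  "inf_part S f = {x \<in> S. \<exists>s::nat \<Rightarrow> 'a. s 0 = x \<and> (\<forall>n. s n \<in> S) \<and> (\<forall>n\<ge>1. f (s n) = s (n - 1))}"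

definition Z_op :: "int \<Rightarrow> int" where "Z_op k = k + 1"

text \<open>E: Inl k encodes k \<in> \<int>; Inr n (n \<ge> 1) encodes (n,1).\<close>
definition E_carrier :: "(int + nat) set" where
  "E_carrier = range Inl \<union> Inr ` {n. n \<ge> 1}"

fun E_op :: "int + nat \<Rightarrow> int + nat" where
  "E_op (Inl k) = Inl (k + 1)"
| "E_op (Inr n) = (if n > 1 then Inr (n - 1) else Inl 0)"

end

theory Submission
  imports Defs
begin

text \<open>Every element has an infinite backward chain, so f is onto and every element lies
  on a bi-infinite orbit; in the connected acyclic algebra the height \<open>n - m\<close> of a over b,
  for any \<open>(f ^^ m) a = (f ^^ n) b\<close>, is well defined. If f were injective, a height function
  would be an isomorphism onto Z. So two elements \<open>x \<noteq> y\<close> have a common image, and the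
  bi-infinite orbit through x together with the backward orbit of y is a copy of E inside A.
  Conversely, every b gives a homomorphism \<open>A \<rightarrow> E\<close> sending the elements below b onto the
  tail of E and all others, by height, onto the line of E; together these embed A into a
  power of E. Both images are retracts since they are mapped onto themselves and contain a
  line: an element whose orbit enters the image is pulled back along f, any other one is
  sent to the line according to its height.\<close>

lemma inf_part_UNIV_imp_surj:
  fixes f :: "'a \<Rightarrow> 'a"
  assumes "inf_part UNIV f = UNIV"
  shows "surj f"
  unfolding surj_def
proof
  fix a
  have "a \<in> inf_part UNIV f" using assms by simp
  then obtain s :: "nat \<Rightarrow> 'a" where "s 0 = a" "\<forall>n\<ge>1. f (s n) = s (n - 1)"
    by (auto simp: inf_part_def)
  then show "\<exists>x. a = f x" by (intro exI[of _ "s 1"]) simp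
qed

definition bi_orbit :: "('a \<Rightarrow> 'a) \<Rightarrow> 'a \<Rightarrow> int \<Rightarrow> 'a" where
  "bi_orbit f x k = (if 0 \<le> k then (f ^^ nat k) x else (inv f ^^ nat (- k)) x)"

lemma bi_orbit_0 [simp]: "bi_orbit f x 0 = x"
  by (simp add: bi_orbit_def)

lemma bi_orbit_of_nat [simp]: "bi_orbit f x (int n) = (f ^^ n) x"
  by (simp add: bi_orbit_def)

lemma f_bi_orbit:
  assumes "surj f"
  shows "f (bi_orbit f x k) = bi_orbit f x (k + 1)"
proof (cases "0 \<le> k")
  case True
  then have "nat (k + 1) = Suc (nat k)" by simp
  with True show ?thesis by (simp add: bi_orbit_def)
next
  case False
  then have "nat (- k) = Suc (nat (- (k + 1)))" by simp
  with False show ?thesis by (simp add: bi_orbit_def surj_f_inv_f[OF assms])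
qed

lemma funpow_bi_orbit:
  assumes "surj f"
  shows "(f ^^ n) (bi_orbit f x k) = bi_orbit f x (k + int n)"
  by (induction n) (simp_all add: f_bi_orbit[OF assms] ac_simps)

lemma funpow_bi_orbit_nonpos:
  assumes "surj f" and "k \<le> 0"
  shows "(f ^^ nat (- k)) (bi_orbit f x k) = x"
  using funpow_bi_orbit[OF assms(1), of "nat (- k)"] assms(2) by simp

lemma retraction_onto_basin:
  fixes F :: "'x \<Rightarrow> 'x"
  assumes closed: "F ` B \<subseteq> B" and onto: "\<forall>b\<in>B. \<exists>c\<in>B. F c = b"
  obtains h where "\<And>x. x \<in> B \<Longrightarrow> h x = x"
    and "\<And>x. \<exists>m. (F ^^ m) x \<in> B \<Longrightarrow> h x \<in> B \<and> h (F x) = F (h x)"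
proof -
  define p where "p b = (SOME c. c \<in> B \<and> F c = b)" for b
  have p: "p b \<in> B \<and> F (p b) = b" if "b \<in> B" for b
  proof -
    from onto that have "\<exists>c. c \<in> B \<and> F c = b" by blast
    then show ?thesis unfolding p_def by (rule someI_ex)
  qed
  have p_pow: "(p ^^ k) b \<in> B" if "b \<in> B" for b k
    using that by (induction k) (auto simp: p)
  define d where "d x = (LEAST m. (F ^^ m) x \<in> B)" for x
  define h where "h x = (p ^^ d x) ((F ^^ d x) x)" for x
  have entry: "(F ^^ d x) x \<in> B" if "\<exists>m. (F ^^ m) x \<in> B" for x
    unfolding d_def using that by (rule LeastI_ex)
  have h_id: "h x = x" if "x \<in> B" for x
  proof -
    have "d x = 0" unfolding d_def using that by (intro Least_eq_0) simp
    then show ?thesis by (simp add: h_def)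
  qed
  have "h x \<in> B \<and> h (F x) = F (h x)" if reach: "\<exists>m. (F ^^ m) x \<in> B" for x
  proof
    show "h x \<in> B" unfolding h_def using entry[OF reach] by (rule p_pow)
    show "h (F x) = F (h x)"
    proof (cases "d x")
      case 0
      then have "x \<in> B" using entry[OF reach] by simp
      with closed h_id show ?thesis by auto
    next
      case (Suc k)
      have Fx_entry: "(F ^^ k) (F x) \<in> B"
        using entry[OF reach] Suc by (simp add: funpow_swap1)
      have "d (F x) = k" unfolding d_def
      proof (rule Least_equality)
        show "(F ^^ k) (F x) \<in> B" by (rule Fx_entry)
        fix j assume "(F ^^ j) (F x) \<in> B"
        then have "d x \<le> Suc j" unfolding d_def by (intro Least_le) (simp add: funpow_swap1)
        with Suc show "k \<le> j" by simp
      qed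
      then have "h (F x) = (p ^^ k) ((F ^^ k) (F x))" by (simp add: h_def)
      also have "\<dots> = F (p ((p ^^ k) ((F ^^ k) (F x))))"
        using p[OF p_pow[OF Fx_entry]] by simp
      also have "p ((p ^^ k) ((F ^^ k) (F x))) = h x"
        using Suc by (simp add: h_def funpow_swap1 funpow_Suc_right del: funpow.simps)
      finally show ?thesis .
    qed
  qed
  with h_id show thesis using that by blast
qed

lemma retract_of_onto_subalgebra:
  fixes F :: "'x \<Rightarrow> 'x" and z :: "int \<Rightarrow> 'x" and lam :: "'x \<Rightarrow> int"
  assumes "B \<subseteq> S" and closed: "F ` B \<subseteq> B" and onto: "\<forall>b\<in>B. \<exists>c\<in>B. F c = b"
    and line: "range z \<subseteq> B" "\<And>k. F (z k) = z (k + 1)"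
    and grading: "\<And>x. x \<in> S \<Longrightarrow> \<forall>m. (F ^^ m) x \<notin> B \<Longrightarrow> lam (F x) = lam x + 1"
  shows "mu_retract S F B"
proof -
  obtain h where h_id: "\<And>x. x \<in> B \<Longrightarrow> h x = x"
    and h_basin: "\<And>x. \<exists>m. (F ^^ m) x \<in> B \<Longrightarrow> h x \<in> B \<and> h (F x) = F (h x)"
    using retraction_onto_basin[OF closed onto] by blast
  define reach where "reach x \<longleftrightarrow> (\<exists>m. (F ^^ m) x \<in> B)" for x
  have reach_F: "reach (F x) \<longleftrightarrow> reach x" for x
  proof
    assume "reach (F x)"
    then obtain m where "(F ^^ m) (F x) \<in> B" unfolding reach_def by blast
    then have "(F ^^ Suc m) x \<in> B" by (simp add: funpow_swap1)
    then show "reach x" unfolding reach_def by blast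
  next
    assume "reach x"
    then obtain m where "(F ^^ m) x \<in> B" unfolding reach_def by blast
    then have "(F ^^ m) (F x) \<in> B" using closed by (auto simp flip: funpow_swap1)
    then show "reach (F x)" unfolding reach_def by blast
  qed
  define r where "r x = (if reach x then h x else z (lam x))" for x
  have "r x \<in> B" for x
    using h_basin line(1) by (auto simp: r_def reach_def)
  moreover have "r (F x) = F (r x)" if "x \<in> S" for x
  proof (cases "reach x")
    case True
    then show ?thesis using h_basin reach_F by (simp add: r_def reach_def)
  next
    case False
    then have "lam (F x) = lam x + 1" using grading[OF that] by (simp add: reach_def)
    with False show ?thesis using line(2) reach_F by (simp add: r_def)
  qed
  moreover have "r x = x" if "x \<in> B" for x
  proof -
    have "reach x" unfolding reach_def using that by (intro exI[of _ 0]) simp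
    with that h_id show ?thesis by (simp add: r_def)
  qed
  ultimately show ?thesis
    unfolding mu_retract_def mu_hom_def using assms(1) closed line(1) by blast
qed

lemma in_RVI:
  fixes S :: "'a set" and T :: "'b set" and I :: "('a + 'b) set"
    and \<phi> :: "'b \<Rightarrow> ('a + 'b) \<Rightarrow> 'a"
  assumes "mu_hom T g (pow_carrier I S) (pow_op I f) \<phi>" and "inj_on \<phi> T"
    and "mu_retract (pow_carrier I S) (pow_op I f) (\<phi> ` T)"
  shows "in_RV S f T g"
proof -
  have "mu_iso T g (\<phi> ` T) (pow_op I f)"
    unfolding mu_iso_def using assms(1,2) by (auto simp: mu_hom_def bij_betw_def)
  with assms(3) show ?thesis unfolding in_RV_def by blast
qed

lemma in_RV_if_retract_image:
  fixes S :: "'a set" and T :: "'b set"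
  assumes hom: "mu_hom T g S f \<psi>" and inj: "inj_on \<psi> T"
    and retract: "mu_retract S f (\<psi> ` T)"
  shows "in_RV S f T g"
proof -
  define i where "i = (Inl undefined :: 'a + 'b)"
  define I where "I = {i}"
  define const where "const a = restrict (\<lambda>_. a) I" for a :: 'a
  have const_hom: "pow_op I f (const a) = const (f a)" for a
    by (simp add: pow_op_def const_def fun_eq_iff)
  have const_in: "const a \<in> pow_carrier I S" if "a \<in> S" for a
    using that by (simp add: pow_carrier_def const_def)
  obtain r where r: "mu_hom S f (\<psi> ` T) f r" "\<forall>x\<in>\<psi> ` T. r x = x"
    using retract unfolding mu_retract_def by blast
  define r' where "r' u = const (r (u i))" for u
  have "mu_hom T g (pow_carrier I S) (pow_op I f) (const \<circ> \<psi>)"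
    using hom const_hom const_in by (auto simp: mu_hom_def)
  moreover have "inj_on (const \<circ> \<psi>) T"
    using inj by (auto simp: inj_on_def const_def I_def fun_eq_iff)
  moreover have "mu_retract (pow_carrier I S) (pow_op I f) ((const \<circ> \<psi>) ` T)"
    unfolding mu_retract_def mu_hom_def
  proof (intro conjI exI ballI)
    show "(const \<circ> \<psi>) ` T \<subseteq> pow_carrier I S"
      using hom const_in by (auto simp: mu_hom_def)
    show "pow_op I f ` (const \<circ> \<psi>) ` T \<subseteq> (const \<circ> \<psi>) ` T"
    proof (intro image_subsetI)
      fix v assume "v \<in> (const \<circ> \<psi>) ` T"
      then obtain t where "t \<in> T" "v = const (\<psi> t)" by auto
      moreover have "f (\<psi> t) \<in> \<psi> ` T"
        using retract \<open>t \<in> T\<close> by (auto simp: mu_retract_def)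
      then obtain t' where "t' \<in> T" "f (\<psi> t) = \<psi> t'" by blast
      ultimately show "pow_op I f v \<in> (const \<circ> \<psi>) ` T" by (simp add: const_hom)
    qed
    show "(const \<circ> \<psi>) ` T \<noteq> {}"
      using retract by (auto simp: mu_retract_def)
    show "r' ` pow_carrier I S \<subseteq> (const \<circ> \<psi>) ` T"
    proof
      fix v assume "v \<in> r' ` pow_carrier I S"
      then obtain u where "u \<in> pow_carrier I S" "v = const (r (u i))"
        unfolding r'_def by blast
      moreover have "u i \<in> S" using \<open>u \<in> pow_carrier I S\<close> by (auto simp: pow_carrier_def I_def)
      ultimately show "v \<in> (const \<circ> \<psi>) ` T" using r(1) by (auto simp: mu_hom_def)
    qed
  next
    fix u assume "u \<in> pow_carrier I S"
    then have "u i \<in> S" by (auto simp: pow_carrier_def I_def)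
    moreover have "pow_op I f u i = f (u i)" by (simp add: pow_op_def I_def)
    ultimately show "r' (pow_op I f u) = pow_op I f (r' u)"
      using r(1) by (simp add: mu_hom_def r'_def const_hom)
  next
    fix u assume "u \<in> (const \<circ> \<psi>) ` T"
    then show "r' u = u"
      using r(2) by (auto simp: r'_def const_def I_def)
  qed
  ultimately show ?thesis by (rule in_RVI)
qed

fun E_height :: "int + nat \<Rightarrow> int" where
  "E_height (Inl k) = k"
| "E_height (Inr n) = - int n"

lemma E_carrier_cases:
  assumes "e \<in> E_carrier"
  obtains k where "e = Inl k" | n where "e = Inr n" "n \<ge> 1"
  using assms unfolding E_carrier_def by auto

lemma E_op_closed: "e \<in> E_carrier \<Longrightarrow> E_op e \<in> E_carrier"
  by (erule E_carrier_cases) (auto simp: E_carrier_def)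

lemma E_height_E_op: "e \<in> E_carrier \<Longrightarrow> E_height (E_op e) = E_height e + 1"
  by (erule E_carrier_cases) auto

lemma E_op_onto: "e \<in> E_carrier \<Longrightarrow> \<exists>e'\<in>E_carrier. E_op e' = e"
proof (erule E_carrier_cases)
  fix k assume "e = Inl k"
  then show ?thesis by (intro bexI[of _ "Inl (k - 1)"]) (auto simp: E_carrier_def)
next
  fix n assume "e = Inr n" "n \<ge> 1"
  then show ?thesis by (intro bexI[of _ "Inr (n + 1)"]) (auto simp: E_carrier_def)
qed

definition E_embed :: "('a \<Rightarrow> 'a) \<Rightarrow> 'a \<Rightarrow> 'a \<Rightarrow> int + nat \<Rightarrow> 'a" where
  "E_embed f x y e =
    (case e of Inl k \<Rightarrow> bi_orbit f x (k + 1) | Inr n \<Rightarrow> bi_orbit f y (1 - int n))"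

lemma E_embed_hom:
  assumes "surj f" and "f x = f y" and "e \<in> E_carrier"
  shows "E_embed f x y (E_op e) = f (E_embed f x y e)"
  using assms(3)
proof (cases rule: E_carrier_cases)
  case (1 k)
  then show ?thesis by (simp add: E_embed_def f_bi_orbit[OF assms(1)] ac_simps)
next
  case (2 n)
  show ?thesis
  proof (cases "n = 1")
    case True
    have "bi_orbit f x 1 = f x" using bi_orbit_of_nat[of f x 1] by simp
    with True show ?thesis using 2 assms(2) by (simp add: E_embed_def)
  next
    case False
    then have "1 - int (n - 1) = 1 - int n + 1" using 2 by simp
    with 2 False show ?thesis by (simp add: E_embed_def f_bi_orbit[OF assms(1)])
  qed
qed

definition height :: "('a \<Rightarrow> 'a) \<Rightarrow> 'a \<Rightarrow> 'a \<Rightarrow> int" where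
  "height f b a = (let (m, n) = SOME (m, n). (f ^^ m) a = (f ^^ n) b in int n - int m)"

definition E_proj :: "('a \<Rightarrow> 'a) \<Rightarrow> 'a \<Rightarrow> 'a \<Rightarrow> int + nat" where
  "E_proj f b a =
    (if \<exists>k. (f ^^ k) a = b then Inr (nat (- height f b a) + 1) else Inl (height f b a - 1))"

lemma E_proj_in_E_carrier: "E_proj f b a \<in> E_carrier"
  by (simp add: E_proj_def E_carrier_def)

locale connected_acyclic =
  fixes f :: "'a \<Rightarrow> 'a"
  assumes connected: "connected_alg UNIV f"
    and acyclic: "\<not> has_cycle UNIV f"
begin

lemma funpow_eq_imp_eq:
  assumes "(f ^^ m) x = (f ^^ n) x"
  shows "m = n"
proof (rule ccontr)
  have no_return: False if "i < j" "(f ^^ i) x = (f ^^ j) x" for i j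
  proof -
    have "(f ^^ (j - i)) ((f ^^ i) x) = (f ^^ (j - i + i)) x" by (simp add: funpow_add)
    also have "\<dots> = (f ^^ i) x" using that by simp
    finally have "(f ^^ (j - i)) ((f ^^ i) x) = (f ^^ i) x" .
    with \<open>i < j\<close> acyclic show False unfolding has_cycle_def by force
  qed
  assume "m \<noteq> n"
  then show False using no_return assms by (metis linorder_neqE_nat)
qed

lemma height_eq:
  assumes "(f ^^ m) a = (f ^^ n) b"
  shows "height f b a = int n - int m"
proof -
  obtain m' n' where some: "(SOME (m, n). (f ^^ m) a = (f ^^ n) b) = (m', n')"
    by (cases "SOME (m, n). (f ^^ m) a = (f ^^ n) b")
  have "(f ^^ m') a = (f ^^ n') b"
    using someI[of "\<lambda>(m, n). (f ^^ m) a = (f ^^ n) b" "(m, n)"] assms by (simp add: some)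
  then have "(f ^^ (m + n')) b = (f ^^ (m' + n)) b"
    using assms by (metis funpow_add comp_apply add.commute)
  then have "m + n' = m' + n" by (rule funpow_eq_imp_eq)
  then show ?thesis by (simp add: height_def some)
qed

lemma height_self [simp]: "height f b b = 0"
  using height_eq[of 0 b 0] by simp

lemma height_funpow: "height f b ((f ^^ k) a) = height f b a + int k"
proof -
  obtain m n where mn: "(f ^^ m) a = (f ^^ n) b"
    using connected unfolding connected_alg_def by blast
  then have "(f ^^ m) ((f ^^ k) a) = (f ^^ (n + k)) b"
    by (metis funpow_add comp_apply add.commute)
  then show ?thesis using height_eq mn by simp
qed

lemma height_f: "height f b (f a) = height f b a + 1"
  using height_funpow[of b 1 a] by simp

lemma height_eq_imp_funpow_eq:
  assumes "height f b a = height f b a'"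
  obtains k where "(f ^^ k) a = (f ^^ k) a'"
proof -
  obtain m n where mn: "(f ^^ m) a = (f ^^ n) b"
    using connected unfolding connected_alg_def by blast
  obtain m' n' where mn': "(f ^^ m') a' = (f ^^ n') b"
    using connected unfolding connected_alg_def by blast
  have "n + m' = n' + m" using assms height_eq[OF mn] height_eq[OF mn'] by simp
  then have "(f ^^ (m + m')) a = (f ^^ (m + m')) a'"
    using mn mn' by (metis funpow_add comp_apply add.commute)
  then show thesis by (rule that)
qed

lemma height_bi_orbit:
  assumes "surj f"
  shows "height f b (bi_orbit f x k) = height f b x + k"
proof (cases "0 \<le> k")
  case True
  then show ?thesis using height_funpow[of b "nat k" x] by (simp add: bi_orbit_def)
next
  case False
  then show ?thesis
    using height_funpow[of b "nat (- k)" "bi_orbit f x k"] funpow_bi_orbit_nonpos[OF assms] by simp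
qed

lemma iso_Z_if_inj:
  assumes "surj f" and "inj f"
  shows "mu_iso UNIV f UNIV Z_op"
  unfolding mu_iso_def mu_hom_def
proof (intro exI conjI)
  define b :: 'a where "b = undefined"
  show "\<forall>a\<in>UNIV. height f b (f a) = Z_op (height f b a)" by (simp add: height_f Z_op_def)
  show "bij_betw (height f b) UNIV UNIV" unfolding bij_betw_def
  proof
    show "inj (height f b)"
    proof (rule injI)
      fix a a' assume "height f b a = height f b a'"
      then obtain k where "(f ^^ k) a = (f ^^ k) a'" by (rule height_eq_imp_funpow_eq)
      then show "a = a'" using inj_fn[OF assms(2)] by (auto dest: injD)
    qed
    show "range (height f b) = UNIV"
      by (rule surjI[of _ "bi_orbit f b"]) (simp add: height_bi_orbit[OF assms(1)])
  qed
qed (simp)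

lemma height_E_embed:
  assumes "surj f" and "f x = f y" and "e \<in> E_carrier"
  shows "height f (f x) (E_embed f x y e) = E_height e"
proof -
  have "height f (f x) x = - 1" and "height f (f x) y = - 1"
    using height_eq[of 1 x 0 "f x"] height_eq[of 1 y 0 "f x"] assms(2) by simp_all
  with assms(3) show ?thesis
    by (cases rule: E_carrier_cases) (simp_all add: E_embed_def height_bi_orbit[OF assms(1)])
qed

lemma inj_on_E_embed:
  assumes "surj f" and "x \<noteq> y" and "f x = f y"
  shows "inj_on (E_embed f x y) E_carrier"
proof (rule inj_onI)
  fix e e' assume e: "e \<in> E_carrier" and e': "e' \<in> E_carrier"
    and eq: "E_embed f x y e = E_embed f x y e'"
  then have same_height: "E_height e = E_height e'"
    using height_E_embed[OF assms(1,3)] by metis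
  have no_mixed: False if "E_embed f x y (Inl (- int n)) = E_embed f x y (Inr n)" "n \<ge> 1" for n
  proof -
    have le: "1 - int n \<le> 0" using that(2) by simp
    have "x = (f ^^ nat (int n - 1)) (bi_orbit f x (1 - int n))"
      using funpow_bi_orbit_nonpos[OF assms(1) le] by simp
    also have "\<dots> = y"
      using that(1) funpow_bi_orbit_nonpos[OF assms(1) le] by (simp add: E_embed_def)
    finally show False using assms(2) by contradiction
  qed
  from e e' same_height eq show "e = e'"
    by (cases rule: E_carrier_cases[OF e]; cases rule: E_carrier_cases[OF e'])
      (auto dest: no_mixed no_mixed[OF sym])
qed

lemma E_embed_image_retract:
  assumes "surj f" and "f x = f y"
  shows "mu_retract UNIV f (E_embed f x y ` E_carrier)"
proof (rule retract_of_onto_subalgebra[where z = "\<lambda>k. E_embed f x y (Inl k)" and lam = "\<lambda>_. 0"])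
  note hom = E_embed_hom[OF assms]
  show "f ` E_embed f x y ` E_carrier \<subseteq> E_embed f x y ` E_carrier"
    using hom E_op_closed by (auto simp flip: hom)
  show "\<forall>b\<in>E_embed f x y ` E_carrier. \<exists>c\<in>E_embed f x y ` E_carrier. f c = b"
    using hom E_op_onto by (force simp flip: hom)
  show "range (\<lambda>k. E_embed f x y (Inl k)) \<subseteq> E_embed f x y ` E_carrier"
    by (auto simp: E_carrier_def)
  show "f (E_embed f x y (Inl k)) = E_embed f x y (Inl (k + 1))" for k
    using hom[of "Inl k"] by (simp add: E_carrier_def)
  show "(\<lambda>_. 0) (f a) = (\<lambda>_. 0) a + (1::int)" if "\<forall>m. (f ^^ m) a \<notin> E_embed f x y ` E_carrier" for a
  proof -
    \<comment> \<open>vacuous: by connectedness every orbit meets the line of the image\<close>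
    obtain m n where "(f ^^ m) a = (f ^^ n) (f x)"
      using connected unfolding connected_alg_def by blast
    also have "\<dots> = E_embed f x y (Inl (int n))"
      using bi_orbit_of_nat[of f x "Suc n"] by (simp add: E_embed_def funpow_swap1 add.commute)
    finally show ?thesis using that by (auto simp: E_carrier_def)
  qed
qed simp

lemma E_in_RV_if_not_inj:
  assumes "surj f" and "\<not> inj f"
  shows "in_RV UNIV f E_carrier E_op"
proof -
  obtain x y where "x \<noteq> y" "f x = f y" using assms(2) unfolding inj_def by blast
  show ?thesis
  proof (rule in_RV_if_retract_image)
    show "mu_hom E_carrier E_op UNIV f (E_embed f x y)"
      using E_embed_hom[OF assms(1) \<open>f x = f y\<close>] by (simp add: mu_hom_def)
    show "inj_on (E_embed f x y) E_carrier" by (rule inj_on_E_embed) fact+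
    show "mu_retract UNIV f (E_embed f x y ` E_carrier)" by (rule E_embed_image_retract) fact+
  qed
qed

lemma E_proj_below:
  assumes "(f ^^ k) a = b"
  shows "E_proj f b a = Inr (Suc k)"
  using assms height_eq[of k a 0 b] by (auto simp: E_proj_def)

lemma E_proj_hom: "E_proj f b (f a) = E_op (E_proj f b a)"
proof (cases "\<exists>k. (f ^^ k) a = b")
  case True
  then obtain k where k: "(f ^^ k) a = b" by blast
  show ?thesis
  proof (cases k)
    case 0
    have "\<nexists>j. (f ^^ j) (f b) = b"
      using funpow_eq_imp_eq[of "Suc _" b 0] by (auto simp: funpow_swap1)
    then show ?thesis using k 0 E_proj_below[OF k] by (simp add: E_proj_def height_f)
  next
    case (Suc j)
    then have "(f ^^ j) (f a) = b" using k by (simp add: funpow_swap1)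
    then have "E_proj f b (f a) = Inr (Suc j)" by (rule E_proj_below)
    with E_proj_below[OF k] Suc show ?thesis by simp
  qed
next
  case False
  then have "\<nexists>j. (f ^^ j) (f a) = b" by (metis funpow_Suc_right comp_apply)
  with False show ?thesis by (simp add: E_proj_def height_f)
qed

lemma E_proj_eq_Inr_1_imp_eq:
  assumes "E_proj f b a = Inr 1"
  shows "a = b"
proof -
  obtain k where k: "(f ^^ k) a = b"
    using assms by (auto simp: E_proj_def split: if_splits)
  with assms have "k = 0" by (simp add: E_proj_below)
  with k show ?thesis by simp
qed

lemma in_RV_of_E_if_surj:
  assumes "surj f"
  shows "in_RV E_carrier E_op UNIV f"
proof -
  define I :: "((int + nat) + 'a) set" where "I = range Inr"
  define \<phi> where "\<phi> a = restrict (\<lambda>i. E_proj f (projr i) a) I" for a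
  have hom: "pow_op I E_op (\<phi> a) = \<phi> (f a)" for a
    by (simp add: pow_op_def \<phi>_def fun_eq_iff E_proj_hom)
  have into: "\<phi> a \<in> pow_carrier I E_carrier" for a
    by (simp add: pow_carrier_def \<phi>_def E_proj_in_E_carrier)
  show ?thesis
  proof (rule in_RVI)
    show "mu_hom UNIV f (pow_carrier I E_carrier) (pow_op I E_op) \<phi>"
      using hom into by (simp add: mu_hom_def image_subset_iff)
    show "inj \<phi>"
    proof (rule injI)
      fix a a' assume "\<phi> a = \<phi> a'"
      then have "\<phi> a (Inr a) = \<phi> a' (Inr a)" by simp
      then have "E_proj f a a' = E_proj f a a" by (simp add: \<phi>_def I_def)
      then have "E_proj f a a' = Inr 1" using E_proj_below[of 0 a a] by simp
      then show "a = a'" by (rule E_proj_eq_Inr_1_imp_eq[symmetric])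
    qed
    define i where "i = (Inr undefined :: (int + nat) + 'a)"
    show "mu_retract (pow_carrier I E_carrier) (pow_op I E_op) (range \<phi>)"
    proof (rule retract_of_onto_subalgebra[where z = "\<lambda>k. \<phi> (bi_orbit f undefined k)"
          and lam = "\<lambda>u. E_height (u i)"])
      show "range \<phi> \<subseteq> pow_carrier I E_carrier" using into by auto
      show "pow_op I E_op ` range \<phi> \<subseteq> range \<phi>" using hom by auto
      show "\<forall>b\<in>range \<phi>. \<exists>c\<in>range \<phi>. pow_op I E_op c = b"
        using hom surj_f_inv_f[OF assms] by (metis rangeE rangeI)
      show "range (\<lambda>k. \<phi> (bi_orbit f undefined k)) \<subseteq> range \<phi>" by auto
      show "pow_op I E_op (\<phi> (bi_orbit f undefined k)) = \<phi> (bi_orbit f undefined (k + 1))" for k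
        by (simp add: hom f_bi_orbit[OF assms])
      show "E_height (pow_op I E_op u i) = E_height (u i) + 1" if "u \<in> pow_carrier I E_carrier" for u
      proof -
        have "i \<in> I" by (simp add: I_def i_def)
        with that have "u i \<in> E_carrier" by (auto simp: pow_carrier_def)
        with \<open>i \<in> I\<close> show ?thesis by (simp add: pow_op_def E_height_E_op)
      qed
    qed
  qed
qed

end

theorem lemma4p1:
  fixes f :: "'a \<Rightarrow> 'a"
  assumes "connected_alg UNIV f"
    and "\<not> has_cycle UNIV f"
    and "\<not> mu_iso (UNIV :: 'a set) f (UNIV :: int set) Z_op"
    and "inf_part UNIV f = UNIV"
  shows "same_RV (UNIV :: 'a set) f E_carrier E_op"
proof -
  interpret connected_acyclic f using assms(1,2) by unfold_locales
  have "surj f" using assms(4) by (rule inf_part_UNIV_imp_surj)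
  moreover have "\<not> inj f" using iso_Z_if_inj[OF \<open>surj f\<close>] assms(3) by blast
  ultimately show ?thesis unfolding same_RV_def using E_in_RV_if_not_inj in_RV_of_E_if_surj by blast
qed

end
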